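(* Let $X$ be a compact topological space, let $D\subseteq X$, let $\overline{D}$ be the closure of $D$ in $X$, and put $\partial D:=\overline{D}\setminus D$. Let $Y$ be a Hausdorff topological space and let $f\colon\overline{D}\to Y$ be a continuous map such that $f(D)$ is open in $Y$. Let $E$ be any connected subset of $Y\setminus f(\partial D)$. Then either $E\subseteq f(D)$ or $f(\overline{D})\subseteq Y\setminus E$.
   Context: Note that $\partial D$ is defined as $\overline{D}\setminus D$ (which coincides with the usual boundary when $D$ is open). *)

theory Defs
  imports "HOL-Analysis.Analysis"
begin

end

theory Submission
  imports Defs
begin

text \<open>The set \<open>f ` D\<close> is open, and inside \<open>E\<close> it coincides with the image of the compact set
  \<open>X closure_of D\<close>, which is closed in the Hausdorff space \<open>Y\<close>.  So \<open>E \<inter> f ` D\<close> is clopen in the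
  connected set \<open>E\<close>.\<close>

lemma connectedin_subset_or_disjnt_clopen:
  assumes "connectedin Y E" "openin Y U" "closedin Y C" "E \<inter> U = E \<inter> C"
  shows "E \<subseteq> U \<or> disjnt E C"
proof -
  have conn: "connectedin (subtopology Y E) E"
    using assms(1) by (simp add: connectedin_subtopology)
  have "openin (subtopology Y E) (E \<inter> U)"
    using openin_subtopology_Int2[OF assms(2)] by (simp add: Int_commute)
  moreover have "closedin (subtopology Y E) (E \<inter> U)"
    using closedin_subtopology_Int_closed[OF assms(3), of E] assms(4) by (simp add: Int_commute)
  ultimately have "E \<subseteq> E \<inter> U \<or> disjnt E (E \<inter> U)"
    using connectedin_clopen_cases[OF conn] by blast
  with assms(4) show ?thesis by (auto simp: disjnt_def)
qed

lemma closedin_image_closure_of: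
  assumes "compact_space X" "Hausdorff_space Y"
    and "continuous_map (subtopology X (X closure_of D)) Y f"
  shows "closedin Y (f ` (X closure_of D))"
proof -
  have "compactin (subtopology X (X closure_of D)) (X closure_of D)"
    using closedin_compact_space[OF assms(1)] by (simp add: compactin_subtopology)
  then have "compactin Y (f ` (X closure_of D))"
    using image_compactin assms(3) by blast
  with assms(2) show ?thesis
    by (rule compactin_imp_closedin)
qed

theorem mainTheorem1:
  fixes X :: "'a topology" and Y :: "'b topology"
    and D :: "'a set" and f :: "'a \<Rightarrow> 'b" and E :: "'b set"
  assumes "compact_space X"
    and "D \<subseteq> topspace X"
    and "Hausdorff_space Y"
    and "continuous_map (subtopology X (X closure_of D)) Y f"
    and "openin Y (f ` D)"
    and "connectedin Y E"
    and "E \<subseteq> topspace Y - f ` (X closure_of D - D)"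
  shows "E \<subseteq> f ` D \<or> f ` (X closure_of D) \<subseteq> topspace Y - E"
proof -
  have closed: "closedin Y (f ` (X closure_of D))"
    using assms(1,3,4) by (rule closedin_image_closure_of)
  have "E \<inter> f ` D = E \<inter> f ` (X closure_of D)"
    using assms(7) closure_of_subset[OF assms(2)] by blast
  then have "E \<subseteq> f ` D \<or> disjnt E (f ` (X closure_of D))"
    using connectedin_subset_or_disjnt_clopen[OF assms(6,5) closed] by blast
  moreover have "f ` (X closure_of D) \<subseteq> topspace Y"
    using closed closedin_subset by blast
  ultimately show ?thesis
    by (auto simp: disjnt_def)
qed

end
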